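(* Let $G = (V, E, \ell)$ be a graph with positive edge lengths, let $A \subseteq V$ be nonempty, and let $p: V \to A$ be a pivot function for $A$, i.e., for every $v\in V$, $p(v)$ is a vertex of $A$ nearest to $v$ (ties broken arbitrarily but consistently). Then for any $u, v \in V$ with $v \notin B_G(u, p(u))$, we have $\mathrm{dist}_G(p(u), p(v)) \leq 4 \cdot \mathrm{dist}_G(u, v)$.
   Context: $\mathrm{dist}_G$ is the shortest-path distance in $G$ with respect to $\ell$. For vertices $u,w$, $B_G(u, w) = \{x \in V: \mathrm{dist}_G(u, x) < \mathrm{dist}_G(u, w)\}$. *)

theory Defs
  imports "HOL-Library.Extended_Real"
begin

definition is_walk :: "'a set \<Rightarrow> 'a set set \<Rightarrow> 'a list \<Rightarrow> 'a \<Rightarrow> 'a \<Rightarrow> bool" where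
  "is_walk V E xs u v \<longleftrightarrow> xs \<noteq> [] \<and> hd xs = u \<and> last xs = v \<and> set xs \<subseteq> V \<and>
     (\<forall>i. Suc i < length xs \<longrightarrow> {xs ! i, xs ! Suc i} \<in> E)"

definition walk_length :: "('a set \<Rightarrow> real) \<Rightarrow> 'a list \<Rightarrow> real" where
  "walk_length l xs = (\<Sum>i<length xs - 1. l {xs ! i, xs ! Suc i})"

text \<open>Shortest-path distance (\<infinity> if v is unreachable from u).\<close>
definition gdist :: "'a set \<Rightarrow> 'a set set \<Rightarrow> ('a set \<Rightarrow> real) \<Rightarrow> 'a \<Rightarrow> 'a \<Rightarrow> ereal" where
  "gdist V E l u v = (INF xs \<in> {xs. is_walk V E xs u v}. ereal (walk_length l xs))"

definition wgraph :: "'a set \<Rightarrow> 'a set set \<Rightarrow> ('a set \<Rightarrow> real) \<Rightarrow> bool" where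
  "wgraph V E l \<longleftrightarrow> finite V \<and> (\<forall>e\<in>E. e \<subseteq> V \<and> card e = 2) \<and> (\<forall>e\<in>E. l e > 0)"

definition gball :: "'a set \<Rightarrow> 'a set set \<Rightarrow> ('a set \<Rightarrow> real) \<Rightarrow> 'a \<Rightarrow> 'a \<Rightarrow> 'a set" where
  "gball V E l u w = {x \<in> V. gdist V E l u x < gdist V E l u w}"

definition is_pivot :: "'a set \<Rightarrow> 'a set set \<Rightarrow> ('a set \<Rightarrow> real) \<Rightarrow> 'a set \<Rightarrow> ('a \<Rightarrow> 'a) \<Rightarrow> bool" where
  "is_pivot V E l A p \<longleftrightarrow> (\<forall>v\<in>V. p v \<in> A \<and> (\<forall>a\<in>A. gdist V E l v (p v) \<le> gdist V E l v a))"

end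

theory Submission
  imports Defs
begin

text \<open>Both the ball condition and the pivot property bound distances by d = dist(u, v):
dist(u, p u) \<le> d since v lies outside the ball, and dist(v, p v) \<le> dist(v, p u) \<le> 2d since
p v is nearest to v among the vertices of A. The triangle inequality through u and v then gives
dist(p u, p v) \<le> d + d + 2d. All that has to be established is that the shortest-path
distance is symmetric and satisfies the triangle inequality, which holds as soon as edge
lengths are nonnegative.\<close>

lemma is_walk_iff_successively:
  "is_walk V E xs u v \<longleftrightarrow>
     xs \<noteq> [] \<and> hd xs = u \<and> last xs = v \<and> set xs \<subseteq> V \<and> successively (\<lambda>a b. {a, b} \<in> E) xs"
  unfolding is_walk_def successively_conv_nth ..

lemma walk_length_Nil [simp]: "walk_length l [] = 0"
  and walk_length_singleton [simp]: "walk_length l [a] = 0"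
  by (simp_all add: walk_length_def)

lemma walk_length_Cons_Cons [simp]:
  "walk_length l (a # b # xs) = l {a, b} + walk_length l (b # xs)"
proof -
  have "walk_length l (a # b # xs) = (\<Sum>i<Suc (length xs). l {(a # b # xs) ! i, (a # b # xs) ! Suc i})"
    by (simp add: walk_length_def)
  also have "\<dots> = l {a, b} + walk_length l (b # xs)"
    by (subst sum.lessThan_Suc_shift) (simp add: walk_length_def)
  finally show ?thesis .
qed

lemma walk_length_append:
  assumes "xs \<noteq> []" and "last xs = hd ys"
  shows "walk_length l (xs @ tl ys) = walk_length l xs + walk_length l ys"
  using assms
proof (induction xs)
  case (Cons a xs)
  then show ?case by (cases xs; cases ys; cases "tl ys") auto
qed simp

lemma walk_length_rev: "walk_length l (rev xs) = walk_length l xs"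
proof (induction xs rule: induct_list012)
  case (3 a b xs)
  have "walk_length l (rev (b # xs) @ tl [b, a]) = walk_length l (rev (b # xs)) + walk_length l [b, a]"
    by (rule walk_length_append) (simp_all add: last_rev)
  then show ?case
    using 3 by (simp add: insert_commute)
qed simp_all

lemma walk_length_nonneg:
  assumes "\<forall>e\<in>E. 0 \<le> l e" and "is_walk V E xs u v"
  shows "0 \<le> walk_length l xs"
  using assms unfolding walk_length_def is_walk_def by (intro sum_nonneg) auto

lemma is_walk_rev: "is_walk V E xs u v \<Longrightarrow> is_walk V E (rev xs) v u"
  by (auto simp: is_walk_iff_successively hd_rev last_rev insert_commute)

lemma is_walk_append:
  assumes "is_walk V E xs u v" and "is_walk V E ys v w"
  shows "is_walk V E (xs @ tl ys) u w"
  using assms by (cases ys) (auto simp: is_walk_iff_successively successively_append_iff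
      successively_Cons dest: list.set_sel(2))

lemma gdist_commute: "gdist V E l u v = gdist V E l v u"
proof -
  have "gdist V E l u v \<le> gdist V E l v u" for u v
    unfolding gdist_def
  proof (rule INF_mono)
    fix xs assume "xs \<in> {xs. is_walk V E xs v u}"
    then have "rev xs \<in> {xs. is_walk V E xs u v}" by (simp add: is_walk_rev)
    then show "\<exists>ys\<in>{xs. is_walk V E xs u v}. ereal (walk_length l ys) \<le> ereal (walk_length l xs)"
      by (metis walk_length_rev order_refl)
  qed
  then show ?thesis by (metis order_antisym)
qed

lemma gdist_nonneg:
  assumes "\<forall>e\<in>E. 0 \<le> l e"
  shows "0 \<le> gdist V E l u v"
  unfolding gdist_def using walk_length_nonneg[OF assms] by (auto intro: INF_greatest)

lemma gdist_triangle:
  assumes nonneg: "\<forall>e\<in>E. 0 \<le> l e"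
  shows "gdist V E l x z \<le> gdist V E l x y + gdist V E l y z"
proof -
  define S where "S = {xs. is_walk V E xs x y}"
  define T where "T = {ys. is_walk V E ys y z}"
  let ?len = "\<lambda>xs. ereal (walk_length l xs)"
  have dist_xy: "gdist V E l x y = (INF xs\<in>S. ?len xs)"
    and dist_yz: "gdist V E l y z = (INF ys\<in>T. ?len ys)"
    by (simp_all add: S_def T_def gdist_def)
  show ?thesis
  proof (cases "S = {} \<or> T = {}")
    case True
    then have "gdist V E l x y = \<infinity> \<or> gdist V E l y z = \<infinity>"
      by (auto simp: dist_xy dist_yz top_ereal_def)
    then show ?thesis
      using gdist_nonneg[OF nonneg] by auto
  next
    case False
    have "gdist V E l x z \<le> (INF xs\<in>S. INF ys\<in>T. ?len xs + ?len ys)"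
    proof (intro INF_greatest)
      fix xs ys assume "xs \<in> S" "ys \<in> T"
      then have "is_walk V E (xs @ tl ys) x z"
        by (simp add: S_def T_def is_walk_append)
      moreover have "walk_length l (xs @ tl ys) = walk_length l xs + walk_length l ys"
        using \<open>xs \<in> S\<close> \<open>ys \<in> T\<close> by (intro walk_length_append) (auto simp: S_def T_def is_walk_def)
      ultimately show "gdist V E l x z \<le> ?len xs + ?len ys"
        unfolding gdist_def by (metis INF_lower mem_Collect_eq plus_ereal.simps(1))
    qed
    also have "\<dots> = (INF xs\<in>S. ?len xs + (INF ys\<in>T. ?len ys))"
      using False walk_length_nonneg[OF nonneg]
      by (intro INF_cong refl INF_ereal_add_right) (auto simp: T_def)
    also have "\<dots> = (INF xs\<in>S. ?len xs) + (INF ys\<in>T. ?len ys)"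
      using False walk_length_nonneg[OF nonneg] gdist_nonneg[OF nonneg, of V y z]
      by (intro INF_ereal_add_left) (auto simp: S_def dist_yz)
    finally show ?thesis
      by (simp add: dist_xy dist_yz)
  qed
qed

theorem claim4p2:
  assumes "wgraph V E l"
    and "A \<subseteq> V" and "A \<noteq> {}"
    and "is_pivot V E l A p"
    and "u \<in> V" and "v \<in> V"
    and "v \<notin> gball V E l u (p u)"
  shows "gdist V E l (p u) (p v) \<le> 4 * gdist V E l u v"
proof -
  let ?dist = "gdist V E l"
  define d where "d = ?dist u v"
  have nonneg: "\<forall>e\<in>E. 0 \<le> l e"
    using assms(1) by (auto simp: wgraph_def less_imp_le)
  note triangle = gdist_triangle[OF nonneg]
  have u_pu: "?dist u (p u) \<le> d"
    using assms(6,7) by (auto simp: gball_def d_def)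
  have "?dist v (p v) \<le> ?dist v (p u)"
    using assms(4,5,6) by (simp add: is_pivot_def)
  also have "\<dots> \<le> ?dist v u + ?dist u (p u)"
    by (rule triangle)
  also have "\<dots> \<le> d + d"
    using u_pu by (simp add: d_def gdist_commute add_mono)
  finally have v_pv: "?dist v (p v) \<le> d + d" .
  have "?dist (p u) (p v) \<le> (?dist (p u) u + ?dist u v) + ?dist v (p v)"
    by (meson triangle add_right_mono order_trans)
  also have "\<dots> \<le> (d + d) + (d + d)"
    using u_pu v_pv by (intro add_mono) (simp_all add: d_def gdist_commute)
  also have "\<dots> = 4 * d"
    using gdist_nonneg[OF nonneg] by (cases d) (auto simp: d_def)
  finally show ?thesis
    by (simp add: d_def)
qed

end
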